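(* Let $P=\frac{1}{\sqrt2}\begin{bmatrix}1&1\\0&0\end{bmatrix}$, $Q=\frac{1}{\sqrt2}\begin{bmatrix}0&0\\1&-1\end{bmatrix}$ and $J=\begin{bmatrix}0&-1\\1&0\end{bmatrix}$. For an initial state $\varphi\in\mathbb{C}^2$ with $\|\varphi\|=1$, define $\Psi^{(n)}_k(\varphi)\in\mathbb{C}^2$ for $n\in\mathbb{Z}_+=\{0,1,2,\dots\}$ and $k\in\mathbb{Z}$ by $\Psi^{(0)}_0(\varphi)=\varphi$, $\Psi^{(0)}_k(\varphi)=0$ for $k\neq 0$, and $\Psi^{(n+1)}_k(\varphi)=Q\Psi^{(n)}_{k-1}(\varphi)+P\Psi^{(n)}_{k+1}(\varphi)$. (i) If $\varphi=\frac{e^{i\theta}}{\sqrt2}\begin{bmatrix}1\\ i\end{bmatrix}$ with $\theta\in[0,2\pi)$, then $\Psi^{(n)}_k(\varphi)=(-1)^n\, i\, J\,\Psi^{(n)}_{-k}(\varphi)$ for all $k\in\mathbb{Z}$ and $n\in\mathbb{Z}_+$. (ii) If $\varphi=\frac{e^{i\theta}}{\sqrt2}\begin{bmatrix}1\\ -i\end{bmatrix}$ with $\theta\in[0,2\pi)$, then $\Psi^{(n)}_k(\varphi)=(-1)^n\,(-i)\, J\,\Psi^{(n)}_{-k}(\varphi)$ for all $k\in\mathbb{Z}$ and $n\in\mathbb{Z}_+$.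
   Context: This is the one-dimensional Hadamard walk: $H=\frac{1}{\sqrt2}\begin{bmatrix}1&1\\1&-1\end{bmatrix}=P+Q$, the upper (resp. lower) component of $\Psi^{(n)}_k(\varphi)$ is the amplitude of the particle at site $k$ at time $n$ with left (resp. right) chirality. The paper realizes the walk on a large cycle of $2N+1$ sites with the particle started at the middle site; for the times considered this coincides with the walk on $\mathbb{Z}$ described in the claim. *)

theory Defs
  imports "HOL-Analysis.Analysis"
begin

definition Pmat :: "complex^2^2" where
  "Pmat = vector [vector [1 / complex_of_real (sqrt 2), 1 / complex_of_real (sqrt 2)], vector [0, 0]]"

definition Qmat :: "complex^2^2" where
  "Qmat = vector [vector [0, 0], vector [1 / complex_of_real (sqrt 2), - 1 / complex_of_real (sqrt 2)]]"

definition Jmat :: "complex^2^2" where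
  "Jmat = vector [vector [0, -1], vector [1, 0]]"

fun Psi :: "complex^2 \<Rightarrow> nat \<Rightarrow> int \<Rightarrow> complex^2" where
  "Psi phi 0 k = (if k = 0 then phi else 0)"
| "Psi phi (Suc n) k = Qmat *v Psi phi n (k - 1) + Pmat *v Psi phi n (k + 1)"

end

theory Submission
  imports Defs
begin

text \<open>The rotation J intertwines the two halves of the Hadamard coin up to sign:
  Q J = - J P and P J = - J Q. Hence whenever Psi solves the walk recursion, so does
  (n, k) \<mapsto> (-1)^n J Psi(n, -k): spatial reflection combined with J is a symmetry of the
  walk. By linearity of the walk, an initial state with phi = c J phi, such as [1, \<plusminus>i] with
  c = \<plusminus>i and any phase, therefore has an evolution that equals c times its own reflection.\<close>

lemma Qmat_Jmat: "Qmat *v (Jmat *v x) = - (Jmat *v (Pmat *v x))"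
  unfolding Qmat_def Pmat_def Jmat_def
  by (simp add: vec_eq_iff forall_2 matrix_vector_mult_def sum_2 algebra_simps diff_divide_distrib)

lemma Pmat_Jmat: "Pmat *v (Jmat *v x) = - (Jmat *v (Qmat *v x))"
  unfolding Qmat_def Pmat_def Jmat_def
  by (simp add: vec_eq_iff forall_2 matrix_vector_mult_def sum_2 algebra_simps diff_divide_distrib)

lemma Psi_reflection:
  assumes "phi = c *s (Jmat *v phi)"
  shows "Psi phi n k = ((-1) ^ n * c) *s (Jmat *v Psi phi n (- k))"
proof (induction n arbitrary: k)
  case 0
  then show ?case using assms by simp
next
  case (Suc n)
  let ?a = "(-1) ^ n * c"
  have "Psi phi (Suc n) k = Qmat *v (?a *s (Jmat *v Psi phi n (- k + 1)))
        + Pmat *v (?a *s (Jmat *v Psi phi n (- k - 1)))"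
  proof -
    have "- (k - 1) = - k + 1" "- (k + 1) = - k - 1" by simp_all
    then show ?thesis using Suc.IH[of "k - 1"] Suc.IH[of "k + 1"] by simp
  qed
  also have "\<dots> = (- ?a) *s (Jmat *v (Qmat *v Psi phi n (- k - 1) + Pmat *v Psi phi n (- k + 1)))"
    by (simp add: vector_scalar_commute Qmat_Jmat Pmat_Jmat algebra_simps)
  also have "\<dots> = ((-1) ^ Suc n * c) *s (Jmat *v Psi phi (Suc n) (- k))"
    by simp
  finally show ?case .
qed

lemma scaled_vector_1_i_Jmat:
  fixes e :: complex
  shows "e *s vector [1, \<i>] = \<i> *s (Jmat *v (e *s vector [1, \<i>]))"
  unfolding Jmat_def
  by (simp add: vec_eq_iff forall_2 matrix_vector_mult_def sum_2 algebra_simps)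

lemma scaled_vector_1_minus_i_Jmat:
  fixes e :: complex
  shows "e *s vector [1, - \<i>] = (- \<i>) *s (Jmat *v (e *s vector [1, - \<i>]))"
  unfolding Jmat_def
  by (simp add: vec_eq_iff forall_2 matrix_vector_mult_def sum_2 algebra_simps)

theorem lemma1:
  fixes \<theta> :: real
  assumes "0 \<le> \<theta>" and "\<theta> < 2 * pi"
  shows "(\<forall>(n::nat) (k::int).
            Psi ((exp (\<i> * complex_of_real \<theta>) / complex_of_real (sqrt 2)) *s vector [1, \<i>]) n k
          = ((-1) ^ n * \<i>) *s (Jmat *v
            Psi ((exp (\<i> * complex_of_real \<theta>) / complex_of_real (sqrt 2)) *s vector [1, \<i>]) n (- k)))
       \<and> (\<forall>(n::nat) (k::int).
            Psi ((exp (\<i> * complex_of_real \<theta>) / complex_of_real (sqrt 2)) *s vector [1, - \<i>]) n k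
          = ((-1) ^ n * (- \<i>)) *s (Jmat *v
            Psi ((exp (\<i> * complex_of_real \<theta>) / complex_of_real (sqrt 2)) *s vector [1, - \<i>]) n (- k)))"
  using Psi_reflection[OF scaled_vector_1_i_Jmat] Psi_reflection[OF scaled_vector_1_minus_i_Jmat]
  by blast

end
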